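(* Let $E$ be an $\mathbb{R}$-group, $X$ a locally compact (Hausdorff) space not reduced to one point, and $\mathcal{H}=(H_\varepsilon)_{\varepsilon\in E}$ a continuous absorptive action of $E$ on $X$ with center $\omega$. Then for every $x\in X$ with $x\neq\omega$, $H_\varepsilon(x)\to\infty$ as $\varepsilon\to\theta$, where $\infty$ is the point at infinity of the Alexandroff compactification of $X$; i.e., for every compact $K\subset X$ there exists $\alpha\in E$ such that $H_\varepsilon(x)\notin K$ for all $\varepsilon\in E$ with $\varepsilon\le\alpha$.
   Context: An $\mathbb{R}$-group is an abelian group $E$ (operation written multiplicatively) whose underlying set is a subset of $\mathbb{R}$ containing all positive integers, such that: (RG1) with the natural order of $\mathbb{R}$, $E$ is a totally ordered group; (RG2) with the topology induced from $\mathbb{R}$, $E$ is a locally compact group; (RG3) there is a nonconstant continuous homomorphism $h:E\to\mathbb{R}_+^*$ such that for every $\alpha\in E$ the set $\{\varepsilon\in E:\varepsilon\ge\alpha\}$ is integrable for $h\cdot m$, $m$ a Haar measure on $E$. $e$ is the identity of $E$, $\varepsilon^{-1}$ the group inverse, $\theta=\inf E\in\mathbb{R}\cup\{\pm\infty\}$; inequalities refer to the order of $\mathbb{R}$. An action of $E$ on $X$ is a family $(H_\varepsilon)_{\varepsilon\in E}$ of bijections of $X$ with $H_\varepsilon\circ H_{\varepsilon'}=H_{\varepsilon\varepsilon'}$, $H_e=\mathrm{id}_X$; continuous if $(\varepsilon,x)\mapsto H_\varepsilon(x)$ is continuous on $E\times X$; absorptive if some $\omega\in X$ satisfies (ABS):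 for every neighbourhood $V$ of $\omega$ and every $x\in X$ there are a neighbourhood $U$ of $x$ and $\alpha\in E$ with $H_{\varepsilon^{-1}}(U)\subset V$ for all $\varepsilon\le\alpha$. For a continuous absorptive action this $\omega$ is unique and called the center. *)

theory Defs
  imports "HOL-Analysis.Analysis"
begin

definition abelian_group_on :: "real set \<Rightarrow> (real \<Rightarrow> real \<Rightarrow> real) \<Rightarrow> real \<Rightarrow> (real \<Rightarrow> real) \<Rightarrow> bool" where
  "abelian_group_on E mul e ginv \<longleftrightarrow>
     e \<in> E \<and>
     (\<forall>a\<in>E. \<forall>b\<in>E. mul a b \<in> E) \<and>
     (\<forall>a\<in>E. ginv a \<in> E) \<and>
     (\<forall>a\<in>E. \<forall>b\<in>E. \<forall>c\<in>E. mul (mul a b) c = mul a (mul b c)) \<and>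
     (\<forall>a\<in>E. \<forall>b\<in>E. mul a b = mul b a) \<and>
     (\<forall>a\<in>E. mul e a = a) \<and>
     (\<forall>a\<in>E. mul (ginv a) a = e)"

text \<open>Haar measure on the locally compact group E (a subspace of the real line):
  a nonzero Borel measure on E, invariant under translations and finite on compact
  sets (regularity is automatic for such measures on second countable locally
  compact spaces).\<close>
definition Haar_measure :: "real set \<Rightarrow> (real \<Rightarrow> real \<Rightarrow> real) \<Rightarrow> real measure \<Rightarrow> bool" where
  "Haar_measure E mul m \<longleftrightarrow>
     space m = E \<and> sets m = sets (restrict_space borel E) \<and>
     emeasure m E \<noteq> 0 \<and>
     (\<forall>K. K \<subseteq> E \<and> compact K \<longrightarrow> emeasure m K < \<infinity>) \<and>
     (\<forall>g\<in>E. \<forall>A\<in>sets m. emeasure m ((\<lambda>x. mul g x) ` A) = emeasure m A)"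

definition R_group :: "real set \<Rightarrow> (real \<Rightarrow> real \<Rightarrow> real) \<Rightarrow> real \<Rightarrow> (real \<Rightarrow> real) \<Rightarrow> bool" where
  "R_group E mul e ginv \<longleftrightarrow>
     abelian_group_on E mul e ginv \<and>
     (\<forall>n::nat. n \<ge> 1 \<longrightarrow> real n \<in> E) \<and>
     \<comment> \<open>(RG1) totally ordered group for the natural order of the reals\<close>
     (\<forall>a\<in>E. \<forall>b\<in>E. \<forall>c\<in>E. a \<le> b \<longrightarrow> mul a c \<le> mul b c) \<and>
     \<comment> \<open>(RG2) locally compact topological group for the induced topology\<close>
     continuous_on (E \<times> E) (\<lambda>(a, b). mul a b) \<and>
     continuous_on E ginv \<and>
     locally compact E \<and>
     \<comment> \<open>(RG3)\<close>
     (\<exists>h :: real \<Rightarrow> real.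
        (\<forall>a\<in>E. h a > 0) \<and> continuous_on E h \<and>
        (\<forall>a\<in>E. \<forall>b\<in>E. h (mul a b) = h a * h b) \<and>
        (\<exists>a\<in>E. \<exists>b\<in>E. h a \<noteq> h b) \<and>
        (\<exists>m. Haar_measure E mul m \<and>
           (\<forall>\<alpha>\<in>E. emeasure (density m (\<lambda>x. ennreal (h x))) {\<epsilon>\<in>E. \<alpha> \<le> \<epsilon>} < \<infinity>)))"

definition action_on :: "real set \<Rightarrow> (real \<Rightarrow> real \<Rightarrow> real) \<Rightarrow> real \<Rightarrow> (real \<Rightarrow> 'a \<Rightarrow> 'a) \<Rightarrow> bool" where
  "action_on E mul e H \<longleftrightarrow>
     (\<forall>\<epsilon>\<in>E. bij (H \<epsilon>)) \<and>
     (\<forall>a\<in>E. \<forall>b\<in>E. H a \<circ> H b = H (mul a b)) \<and>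
     H e = id"

definition continuous_action :: "real set \<Rightarrow> (real \<Rightarrow> 'a::topological_space \<Rightarrow> 'a) \<Rightarrow> bool" where
  "continuous_action E H \<longleftrightarrow> continuous_on (E \<times> UNIV) (\<lambda>(\<epsilon>, x). H \<epsilon> x)"

text \<open>Condition (ABS) for the point \<omega> (neighbourhoods may be taken open).\<close>
definition ABS :: "real set \<Rightarrow> (real \<Rightarrow> real) \<Rightarrow> (real \<Rightarrow> 'a::topological_space \<Rightarrow> 'a) \<Rightarrow> 'a \<Rightarrow> bool" where
  "ABS E ginv H \<omega> \<longleftrightarrow>
     (\<forall>V. open V \<and> \<omega> \<in> V \<longrightarrow>
        (\<forall>x. \<exists>U. open U \<and> x \<in> U \<and>
              (\<exists>\<alpha>\<in>E. \<forall>\<epsilon>\<in>E. \<epsilon> \<le> \<alpha> \<longrightarrow> H (ginv \<epsilon>) ` U \<subseteq> V)))"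

end

theory Submission
  imports Defs
begin

(* Fix x \<noteq> \<omega> and a compact K.  By the Hausdorff property choose an
   open V \<ni> \<omega> with x \<notin> V.  Condition (ABS) gives every point y an open neighbourhood U y
   and a threshold a y such that H (ginv \<epsilon>) maps U y into V for all \<epsilon> \<le> a y.  For such \<epsilon>
   the point H \<epsilon> x cannot lie in U y, since H (ginv \<epsilon>) sends it back to x \<notin> V.  Finitely
   many U y cover K, and below the least of their thresholds H \<epsilon> x avoids all of them,
   hence avoids K. *)

definition eventually_low :: "real set \<Rightarrow> (real \<Rightarrow> bool) \<Rightarrow> bool" where
  "eventually_low E P \<longleftrightarrow> (\<exists>\<alpha>\<in>E. \<forall>\<epsilon>\<in>E. \<epsilon> \<le> \<alpha> \<longrightarrow> P \<epsilon>)"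

text \<open>Finitely many "eventually small" properties hold simultaneously: take the least of
  the finitely many thresholds.  Nonemptiness of \<open>E\<close> covers the empty conjunction.\<close>
lemma eventually_low_finite_ball:
  assumes "finite T" and "E \<noteq> {}" and "\<And>y. y \<in> T \<Longrightarrow> eventually_low E (P y)"
  shows "eventually_low E (\<lambda>\<epsilon>. \<forall>y\<in>T. P y \<epsilon>)"
proof (cases "T = {}")
  case True
  then show ?thesis using \<open>E \<noteq> {}\<close> unfolding eventually_low_def by auto
next
  case False
  obtain a where a: "\<And>y. y \<in> T \<Longrightarrow> a y \<in> E"
    "\<And>y \<epsilon>. y \<in> T \<Longrightarrow> \<epsilon> \<in> E \<Longrightarrow> \<epsilon> \<le> a y \<Longrightarrow> P y \<epsilon>"
    using assms(3) unfolding eventually_low_def by metis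
  have min_in: "Min (a ` T) \<in> a ` T" using False \<open>finite T\<close> by simp
  have "\<forall>y\<in>T. P y \<epsilon>" if "\<epsilon> \<in> E" "\<epsilon> \<le> Min (a ` T)" for \<epsilon>
  proof
    fix y assume "y \<in> T"
    hence "Min (a ` T) \<le> a y" using \<open>finite T\<close> by simp
    then show "P y \<epsilon>" using a(2)[OF \<open>y \<in> T\<close> that(1)] that(2) by linarith
  qed
  moreover have "Min (a ` T) \<in> E" using min_in a(1) by auto
  ultimately show ?thesis unfolding eventually_low_def by blast
qed

lemma action_inverse_cancel:
  assumes "abelian_group_on E mul e ginv" and "action_on E mul e H" and "\<epsilon> \<in> E"
  shows "H (ginv \<epsilon>) (H \<epsilon> x) = x"
proof -
  have "ginv \<epsilon> \<in> E" and inv: "mul (ginv \<epsilon>) \<epsilon> = e"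
    using assms(1,3) unfolding abelian_group_on_def by auto
  moreover have "\<forall>a\<in>E. \<forall>b\<in>E. H a \<circ> H b = H (mul a b)" and "H e = id"
    using assms(2) unfolding action_on_def by auto
  ultimately have "H (ginv \<epsilon>) \<circ> H \<epsilon> = id" using assms(3) by metis
  then show ?thesis by (metis comp_apply id_apply)
qed

lemma orbit_eventually_avoids:
  assumes "abelian_group_on E mul e ginv" and "action_on E mul e H" and "x \<notin> V"
    and "eventually_low E (\<lambda>\<epsilon>. H (ginv \<epsilon>) ` U \<subseteq> V)"
  shows "eventually_low E (\<lambda>\<epsilon>. H \<epsilon> x \<notin> U)"
proof -
  have "H \<epsilon> x \<notin> U" if "\<epsilon> \<in> E" and maps: "H (ginv \<epsilon>) ` U \<subseteq> V" for \<epsilon>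
  proof
    assume "H \<epsilon> x \<in> U"
    then have "H (ginv \<epsilon>) (H \<epsilon> x) \<in> V" using maps by blast
    then show False
      using action_inverse_cancel[OF assms(1,2) \<open>\<epsilon> \<in> E\<close>] \<open>x \<notin> V\<close> by simp
  qed
  then show ?thesis using assms(4) unfolding eventually_low_def by blast
qed

theorem corollary2p2:
  fixes E :: "real set" and mul :: "real \<Rightarrow> real \<Rightarrow> real" and e :: real
    and ginv :: "real \<Rightarrow> real" and H :: "real \<Rightarrow> 'a::t2_space \<Rightarrow> 'a" and \<omega> :: 'a
  assumes "R_group E mul e ginv"
    and "locally compact (UNIV :: 'a set)"
    and "\<exists>y z :: 'a. y \<noteq> z"
    and "action_on E mul e H"
    and "continuous_action E H"
    and "ABS E ginv H \<omega>"
  shows "\<forall>x. x \<noteq> \<omega> \<longrightarrow>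
           (\<forall>K. compact K \<longrightarrow> (\<exists>\<alpha>\<in>E. \<forall>\<epsilon>\<in>E. \<epsilon> \<le> \<alpha> \<longrightarrow> H \<epsilon> x \<notin> K))"
proof (intro allI impI)
  fix x and K :: "'a set" assume "x \<noteq> \<omega>" and "compact K"
  have grp: "abelian_group_on E mul e ginv" using assms(1) unfolding R_group_def by blast
  then have "E \<noteq> {}" unfolding abelian_group_on_def by auto
  obtain V where "open V" "\<omega> \<in> V" "x \<notin> V" using separation_t2 \<open>x \<noteq> \<omega>\<close> by blast
  then obtain U where U: "\<And>y. open (U y)" "\<And>y. y \<in> U y"
    "\<And>y. eventually_low E (\<lambda>\<epsilon>. H (ginv \<epsilon>) ` U y \<subseteq> V)"
    using assms(6) unfolding ABS_def eventually_low_def by metis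
  obtain T where T: "T \<subseteq> K" "finite T" "K \<subseteq> (\<Union>y\<in>T. U y)"
    using compactE_image[OF \<open>compact K\<close>, of K U] U(1,2) by blast
  have "eventually_low E (\<lambda>\<epsilon>. \<forall>y\<in>T. H \<epsilon> x \<notin> U y)"
    by (rule eventually_low_finite_ball[OF \<open>finite T\<close> \<open>E \<noteq> {}\<close>])
      (rule orbit_eventually_avoids[OF grp assms(4) \<open>x \<notin> V\<close> U(3)])
  then show "\<exists>\<alpha>\<in>E. \<forall>\<epsilon>\<in>E. \<epsilon> \<le> \<alpha> \<longrightarrow> H \<epsilon> x \<notin> K"
    using T(3) unfolding eventually_low_def by blast
qed

end
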